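(* In the publishing problem, assume the delay cost is global (a single non-negative function $C^{(d)}$), the gas price is constant, i.e. $R(P)=P$ with probability $1$ and $P_t=P$ for all $t$, and the publishing cost is constant, $C^{(p)}_t(N)=\beta\,\mathbb{1}[N\neq\emptyset]$. Then an optimal policy is to publish all pending transactions at constant intervals of length $n^*$ (i.e. consecutive publication steps are $n^*$ steps apart), where $$n^*\in\arg\min_{n\ge1}\frac{F^{(d)}(n)+\gamma^{n-1}\beta P}{1-\gamma^n}.$$
   Context: The publishing problem is the following infinite-horizon MDP in discrete time $t=0,1,2,\dots$. At each step $t$ a new transaction $H_t$ is created. The state at time $t$ is $(t,P_t,Q_t)$ with gas price $P_t\ge0$ and set $Q_t$ of unpublished transactions ($Q_0=\emptyset$). A policy $\pi$ chooses $N^\pi_t\subseteq Q_t$ to publish, incurring cost $C_t=P_t\,C^{(p)}_t(N^\pi_t)+C^{(d)}_t(Q_t\setminus N^\pi_t)$; then $Q_{t+1}=(Q_t\setminus N^\pi_t)\cup\{H_t\}$ and $P_{t+1}=R(P_t)$ for a random function $R$. Publishing cost: $C^{(p)}_t(N)=\alpha|N|+\beta\,\mathbb{1}[N\ne\emptyset]$, $\alpha,\beta\ge0$ (here $\alpha=0$). Delay cost: $C^{(d)}_t(N)=\sum_{H_\tau\in N}C^{(d)}_{H_\tau}(t-\tau)$ with non-negative functions $C^{(d)}_{H_\tau}$; it is global if all $C^{(d)}_{H_\tau}$ equal one function $C^{(d)}$. The expected total cost is $C(\pi)=\mathbb{E}[\sum_t\gamma^tC_t]$ with $0<\gamma<1$,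 and a policy is optimal if it minimizes $C(\pi)$. The aggregated delay cost is $F^{(d)}(n)=\sum_{t=1}^{n-1}\sum_{i=1}^{t}\gamma^{t-1}C^{(d)}(i)$. *)

theory Defs
  imports Complex_Main "HOL-Library.Extended_Nonnegative_Real"
begin

text \<open>Transaction H_t is identified with
  its creation time t. A policy is the sequence N of sets published at each step.\<close>

primrec queue :: "(nat \<Rightarrow> nat set) \<Rightarrow> nat \<Rightarrow> nat set" where
  "queue N 0 = {}"
| "queue N (Suc t) = (queue N t - N t) \<union> {t}"

definition feasible :: "(nat \<Rightarrow> nat set) \<Rightarrow> bool" where
  "feasible N \<longleftrightarrow> (\<forall>t. N t \<subseteq> queue N t)"

definition step_cost :: "real \<Rightarrow> real \<Rightarrow> (nat \<Rightarrow> real) \<Rightarrow> (nat \<Rightarrow> nat set) \<Rightarrow> nat \<Rightarrow> real" where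
  "step_cost P \<beta> Cd N t =
     P * (\<beta> * (if N t = {} then 0 else 1)) + (\<Sum>\<tau>\<in>queue N t - N t. Cd (t - \<tau>))"

definition total_cost :: "real \<Rightarrow> real \<Rightarrow> real \<Rightarrow> (nat \<Rightarrow> real) \<Rightarrow> (nat \<Rightarrow> nat set) \<Rightarrow> ennreal" where
  "total_cost \<gamma> P \<beta> Cd N = (\<Sum>t. ennreal (\<gamma> ^ t * step_cost P \<beta> Cd N t))"

definition optimal :: "real \<Rightarrow> real \<Rightarrow> real \<Rightarrow> (nat \<Rightarrow> real) \<Rightarrow> (nat \<Rightarrow> nat set) \<Rightarrow> bool" where
  "optimal \<gamma> P \<beta> Cd N \<longleftrightarrow> feasible N \<and>
     (\<forall>N'. feasible N' \<longrightarrow> total_cost \<gamma> P \<beta> Cd N \<le> total_cost \<gamma> P \<beta> Cd N')"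

definition F_d :: "real \<Rightarrow> (nat \<Rightarrow> real) \<Rightarrow> nat \<Rightarrow> real" where
  "F_d \<gamma> Cd n = (\<Sum>t=1..n-1. \<Sum>i=1..t. \<gamma> ^ (t - 1) * Cd i)"

definition periodic_publish :: "nat \<Rightarrow> (nat \<Rightarrow> nat set) \<Rightarrow> bool" where
  "periodic_publish n N \<longleftrightarrow> (\<forall>t. N t = (if n dvd t then queue N t else {}))"

end

theory Submission
  imports Defs
begin

text \<open>
  Let \<open>c\<close> be the minimum over \<open>n \<ge> 1\<close> of \<open>cycle_cost n / (1 - \<gamma>^n)\<close>, attained at
  \<open>n\<^sup>*\<close>. Charge each step only the delay of the transactions created since the last
  publication; this underestimates the cost of every policy and is exact for policies that
  always publish the whole queue. If \<open>a\<close> is the age of the current cycle at time \<open>T\<close>, the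
  charged cost before \<open>T\<close> plus \<open>\<gamma>^(T+1-a) (c - F_d a)\<close> telescopes to \<open>\<gamma> c\<close> plus one
  non-negative excess term per completed cycle, and these terms vanish for cycles of length
  \<open>n\<^sup>*\<close>. Hence every policy costs at least \<open>\<gamma> c\<close>, and the policy with period \<open>n\<^sup>*\<close>
  costs at most \<open>\<gamma> c\<close>.
\<close>

definition delay_sum :: "(nat \<Rightarrow> real) \<Rightarrow> nat \<Rightarrow> real" where
  "delay_sum Cd m = (\<Sum>i=1..m. Cd i)"

text \<open>A cycle of \<open>n\<close> steps following a publication at time \<open>s\<close> and ending with the next
  publication costs \<open>\<gamma>^(s+1) * cycle_cost n\<close>.\<close>

definition cycle_cost :: "real \<Rightarrow> real \<Rightarrow> real \<Rightarrow> (nat \<Rightarrow> real) \<Rightarrow> nat \<Rightarrow> real" where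
  "cycle_cost \<gamma> P \<beta> Cd n = F_d \<gamma> Cd n + \<gamma> ^ (n - 1) * \<beta> * P"

definition cycle_excess :: "real \<Rightarrow> real \<Rightarrow> real \<Rightarrow> (nat \<Rightarrow> real) \<Rightarrow> real \<Rightarrow> nat \<Rightarrow> real" where
  "cycle_excess \<gamma> P \<beta> Cd c n = cycle_cost \<gamma> P \<beta> Cd n - c * (1 - \<gamma> ^ n)"

lemma F_d_Suc:
  assumes "1 \<le> n"
  shows "F_d \<gamma> Cd (Suc n) = F_d \<gamma> Cd n + \<gamma> ^ (n - 1) * delay_sum Cd n"
  using assms by (cases n) (simp_all add: F_d_def delay_sum_def sum_distrib_left distrib_left)

lemma F_d_mono:
  assumes "m \<le> n" "0 \<le> \<gamma>" "\<And>i. 0 \<le> Cd i"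
  shows "F_d \<gamma> Cd m \<le> F_d \<gamma> Cd n"
  unfolding F_d_def
  by (rule sum_mono2) (use assms in \<open>auto intro!: sum_nonneg\<close>)

lemma F_d_nonneg:
  assumes "0 \<le> \<gamma>" "\<And>i. 0 \<le> Cd i"
  shows "0 \<le> F_d \<gamma> Cd n"
  unfolding F_d_def using assms by (auto intro!: sum_nonneg)

lemma cycle_cost_nonneg:
  assumes "0 \<le> \<gamma>" "0 \<le> P" "0 \<le> \<beta>" "\<And>i. 0 \<le> Cd i"
  shows "0 \<le> cycle_cost \<gamma> P \<beta> Cd n"
  unfolding cycle_cost_def using assms F_d_nonneg by simp

lemma sum_delays_atLeastLessThan:
  assumes "a \<le> t"
  shows "(\<Sum>\<tau>\<in>{a..<t}. Cd (t - \<tau>)) = delay_sum Cd (t - a)"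
  unfolding delay_sum_def
  by (rule sum.reindex_bij_witness[where i="\<lambda>i. t - i" and j="\<lambda>\<tau>. t - \<tau>"]) (use assms in auto)

text \<open>Time 0 counts as a publication: the queue is empty there.\<close>

primrec last_pub :: "(nat \<Rightarrow> nat set) \<Rightarrow> nat \<Rightarrow> nat" where
  "last_pub N 0 = 0"
| "last_pub N (Suc t) = (if N t = {} then last_pub N t else t)"

definition age :: "(nat \<Rightarrow> nat set) \<Rightarrow> nat \<Rightarrow> nat" where
  "age N t = t - last_pub N t"

lemma last_pub_le: "last_pub N t \<le> t"
  by (induction t) auto

lemma age_0 [simp]: "age N 0 = 0"
  by (simp add: age_def)

lemma age_Suc [simp]: "age N (Suc t) = (if N t = {} then Suc (age N t) else 1)"
  using last_pub_le[of N t] by (simp add: age_def Suc_diff_le)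

lemma age_le: "age N t \<le> t"
  by (simp add: age_def)

lemma age_pos: "0 < t \<Longrightarrow> 0 < age N t"
  by (cases t) simp_all

lemma queue_subset_lessThan: "queue N t \<subseteq> {..<t}"
  by (induction t) auto

lemma finite_queue [simp]: "finite (queue N t)"
  using queue_subset_lessThan finite_subset by blast

lemma atLeastLessThan_last_pub_subset_queue: "{last_pub N t..<t} \<subseteq> queue N t"
proof (induction t)
  case (Suc t)
  have "{last_pub N t..<Suc t} = {last_pub N t..<t} \<union> {t}"
    using last_pub_le[of N t] by auto
  with Suc show ?case by auto
qed simp

lemma queue_flushing:
  assumes "\<And>t. N t = {} \<or> N t = queue N t"
  shows "queue N t = {last_pub N t..<t}"
proof (induction t)
  case (Suc t)
  have "{last_pub N t..<Suc t} = {last_pub N t..<t} \<union> {t}"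
    using last_pub_le[of N t] by auto
  with Suc assms[of t] show ?case by auto
qed simp

definition flush_cost :: "real \<Rightarrow> real \<Rightarrow> (nat \<Rightarrow> real) \<Rightarrow> (nat \<Rightarrow> nat set) \<Rightarrow> nat \<Rightarrow> real" where
  "flush_cost P \<beta> Cd N t = (if N t = {} then delay_sum Cd (age N t) else \<beta> * P)"

lemma step_cost_ge_flush_cost:
  assumes "0 \<le> P" "0 \<le> \<beta>" "\<And>i. 0 \<le> Cd i"
  shows "flush_cost P \<beta> Cd N t \<le> step_cost P \<beta> Cd N t"
proof (cases "N t = {}")
  case True
  have "delay_sum Cd (age N t) = (\<Sum>\<tau>\<in>{last_pub N t..<t}. Cd (t - \<tau>))"
    by (simp add: age_def sum_delays_atLeastLessThan last_pub_le)
  also have "\<dots> \<le> (\<Sum>\<tau>\<in>queue N t. Cd (t - \<tau>))"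
    by (rule sum_mono2[OF finite_queue atLeastLessThan_last_pub_subset_queue]) (use assms in auto)
  finally show ?thesis using True by (simp add: flush_cost_def step_cost_def)
qed (use assms in \<open>auto simp: flush_cost_def step_cost_def intro!: sum_nonneg\<close>)

lemma step_cost_nonneg:
  assumes "0 \<le> P" "0 \<le> \<beta>" "\<And>i. 0 \<le> Cd i"
  shows "0 \<le> step_cost P \<beta> Cd N t"
  unfolding step_cost_def using assms by (auto intro!: add_nonneg_nonneg sum_nonneg)

lemma step_cost_flushing:
  assumes "\<And>t. N t = {} \<or> N t = queue N t"
  shows "step_cost P \<beta> Cd N t = flush_cost P \<beta> Cd N t"
  using assms[of t] queue_flushing[OF assms, of t]
  by (auto simp: flush_cost_def step_cost_def age_def sum_delays_atLeastLessThan last_pub_le)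

lemma flush_cost_potential:
  fixes \<gamma> c :: real
  assumes "0 < T"
  shows "\<gamma> * c + (\<Sum>t\<in>{1..<T}. if N t = {} then 0
            else \<gamma> ^ (t + 1 - age N t) * cycle_excess \<gamma> P \<beta> Cd c (age N t))
       = (\<Sum>t\<in>{1..<T}. \<gamma> ^ t * flush_cost P \<beta> Cd N t)
         + \<gamma> ^ (T + 1 - age N T) * (c - F_d \<gamma> Cd (age N T))"
  using assms
proof (induction T rule: nat_induct_non_zero)
  case 1
  then show ?case by (simp add: F_d_def)
next
  case (Suc T)
  obtain e where e: "age N T = Suc e"
    using age_pos[OF Suc.hyps] not0_implies_Suc by blast
  have "e < T"
    using age_le[of N T] e by simp
  then have pow: "\<gamma> ^ (T - e) * \<gamma> ^ e = \<gamma> ^ T" "\<gamma> ^ (T - e) * \<gamma> ^ Suc e = \<gamma> ^ Suc T"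
    by (simp_all add: power_add[symmetric])
  let ?rem = "\<lambda>T. \<gamma> ^ (T + 1 - age N T) * (c - F_d \<gamma> Cd (age N T))"
  let ?slack = "\<lambda>t. if N t = {} then 0 else \<gamma> ^ (t + 1 - age N t) * cycle_excess \<gamma> P \<beta> Cd c (age N t)"
  have "?rem (Suc T) + \<gamma> ^ T * flush_cost P \<beta> Cd N T = ?rem T + ?slack T"
  proof (cases "N T = {}")
    case True
    have "?rem (Suc T) = \<gamma> ^ (T - e) * (c - F_d \<gamma> Cd (Suc e))
        - (\<gamma> ^ (T - e) * \<gamma> ^ e) * delay_sum Cd (Suc e)"
      using True \<open>e < T\<close> by (simp add: e F_d_Suc Suc_diff_le algebra_simps)
    with True \<open>e < T\<close> show ?thesis
      by (simp add: e pow flush_cost_def Suc_diff_le)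
  next
    case False
    have "?rem T + ?slack T = (\<gamma> ^ (T - e) * \<gamma> ^ e) * \<beta> * P + (\<gamma> ^ (T - e) * \<gamma> ^ Suc e) * c"
      using False \<open>e < T\<close> by (simp add: e cycle_excess_def cycle_cost_def Suc_diff_le algebra_simps)
    with False show ?thesis
      by (simp add: pow flush_cost_def F_d_def)
  qed
  with Suc.IH Suc.hyps show ?case by simp
qed

lemma partial_cost_ge:
  fixes \<gamma> c :: real
  assumes "0 \<le> \<gamma>" "0 \<le> P" "0 \<le> \<beta>" "\<And>i. 0 \<le> Cd i"
    and cycle: "\<And>n. 1 \<le> n \<Longrightarrow> c * (1 - \<gamma> ^ n) \<le> cycle_cost \<gamma> P \<beta> Cd n"
  shows "\<gamma> * c - \<gamma> ^ T * (\<beta> * P + \<gamma> * c) \<le> (\<Sum>t<T. \<gamma> ^ t * step_cost P \<beta> Cd N t)"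
proof (cases "T = 0")
  case True
  then show ?thesis using assms by simp
next
  case False
  define e where "e = age N T"
  have e: "1 \<le> e" "e \<le> T"
    using age_pos[of T N] age_le[of N T] False by (simp_all add: e_def)
  have "c - F_d \<gamma> Cd e \<le> \<gamma> ^ (e - 1) * \<beta> * P + \<gamma> ^ e * c"
    using cycle[OF e(1)] by (simp add: cycle_cost_def algebra_simps)
  then have "\<gamma> ^ (T + 1 - e) * (c - F_d \<gamma> Cd e)
      \<le> \<gamma> ^ (T + 1 - e) * (\<gamma> ^ (e - 1) * \<beta> * P + \<gamma> ^ e * c)"
    by (rule mult_left_mono) (simp add: assms(1))
  also have "\<dots> = \<gamma> ^ (T + 1 - e + (e - 1)) * \<beta> * P + \<gamma> ^ (T + 1 - e + e) * c"
    by (simp only: power_add) (simp add: algebra_simps)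
  also have "\<dots> = \<gamma> ^ T * (\<beta> * P + \<gamma> * c)"
    using e by (simp add: algebra_simps)
  finally have remainder: "\<gamma> ^ (T + 1 - e) * (c - F_d \<gamma> Cd e) \<le> \<gamma> ^ T * (\<beta> * P + \<gamma> * c)" .
  have "0 \<le> (\<Sum>t\<in>{1..<T}. if N t = {} then 0
            else \<gamma> ^ (t + 1 - age N t) * cycle_excess \<gamma> P \<beta> Cd c (age N t))"
    using assms(1) cycle age_pos by (auto intro!: sum_nonneg mult_nonneg_nonneg simp: cycle_excess_def Suc_le_eq)
  then have "\<gamma> * c - \<gamma> ^ T * (\<beta> * P + \<gamma> * c) \<le> (\<Sum>t\<in>{1..<T}. \<gamma> ^ t * flush_cost P \<beta> Cd N t)"
    using flush_cost_potential[of T \<gamma> c N P \<beta> Cd] False remainder by (simp add: e_def)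
  also have "\<dots> \<le> (\<Sum>t\<in>{1..<T}. \<gamma> ^ t * step_cost P \<beta> Cd N t)"
    using assms by (intro sum_mono mult_left_mono step_cost_ge_flush_cost) simp_all
  also have "\<dots> \<le> (\<Sum>t<T. \<gamma> ^ t * step_cost P \<beta> Cd N t)"
    using assms step_cost_nonneg by (intro sum_mono2) auto
  finally show ?thesis .
qed

lemma periodic_publish_exists: "\<exists>N. periodic_publish n N"
proof -
  define L where "L = rec_nat {} (\<lambda>t Q. (if n dvd t then {} else Q) \<union> {t})"
  define N where "N t = (if n dvd t then L t else {})" for t
  have queue_N: "queue N t = L t" for t
    by (induction t) (auto simp: L_def N_def)
  have "periodic_publish n N"
    unfolding periodic_publish_def queue_N by (simp add: N_def)
  then show ?thesis by blast
qed

lemma periodic_feasible: "periodic_publish n N \<Longrightarrow> feasible N"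
  by (simp add: periodic_publish_def feasible_def)

lemma periodic_flushing: "periodic_publish n N \<Longrightarrow> N t = {} \<or> N t = queue N t"
  by (simp add: periodic_publish_def)

lemma age_periodic:
  assumes "periodic_publish n N" "0 < n"
  shows "age N (Suc t) = Suc (t mod n)"
proof (induction t)
  case (Suc t)
  have "N (Suc t) = {} \<longleftrightarrow> \<not> n dvd Suc t"
    using assms(1) by (simp add: periodic_publish_def)
  with Suc assms(2) show ?case
    by (simp add: mod_Suc dvd_eq_mod_eq_0)
qed simp

lemma periodic_partial_cost_le:
  fixes \<gamma> c :: real
  assumes periodic: "periodic_publish n N" and "0 < n"
    and "0 \<le> \<gamma>" "\<gamma> < 1" "0 \<le> P" "0 \<le> \<beta>" "\<And>i. 0 \<le> Cd i"
    and cycle: "c * (1 - \<gamma> ^ n) = cycle_cost \<gamma> P \<beta> Cd n"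
  shows "(\<Sum>t<T. \<gamma> ^ t * step_cost P \<beta> Cd N t) \<le> \<gamma> * c"
proof -
  have "0 < 1 - \<gamma> ^ n"
    using assms by (simp add: power_less_one_iff)
  moreover have "0 \<le> c * (1 - \<gamma> ^ n)"
    using cycle cycle_cost_nonneg assms by simp
  ultimately have "0 \<le> c"
    by (simp add: zero_le_mult_iff)
  have F_le_c: "F_d \<gamma> Cd m \<le> c" if "m \<le> n" for m
  proof -
    have "F_d \<gamma> Cd m \<le> F_d \<gamma> Cd n"
      using F_d_mono[OF that] assms by simp
    also have "\<dots> \<le> c * (1 - \<gamma> ^ n)"
      using assms by (simp add: cycle cycle_cost_def)
    also have "\<dots> \<le> c"
      using \<open>0 \<le> c\<close> assms(3) by (simp add: mult_left_le)
    finally show ?thesis .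
  qed
  have age_le_n: "age N t \<le> n" for t
    using age_periodic[OF periodic \<open>0 < n\<close>] \<open>0 < n\<close> by (cases t) (simp_all add: Suc_leI)
  have age_dvd: "age N t = n" if "0 < t" "n dvd t" for t
    using that age_periodic[OF periodic \<open>0 < n\<close>] \<open>0 < n\<close>
    by (cases t) (simp_all add: mod_Suc dvd_eq_mod_eq_0 split: if_splits)
  show ?thesis
  proof (cases "T = 0")
    case True
    then show ?thesis using F_le_c[of 0] F_d_nonneg[of \<gamma> Cd 0] assms by simp
  next
    case False
    have no_slack: "(\<Sum>t\<in>{1..<T}. if N t = {} then 0
            else \<gamma> ^ (t + 1 - age N t) * cycle_excess \<gamma> P \<beta> Cd c (age N t)) = 0"
      using periodic age_dvd cycle
      by (intro sum.neutral) (auto simp: periodic_publish_def cycle_excess_def split: if_splits)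
    have "0 \<le> \<gamma> ^ (T + 1 - age N T) * (c - F_d \<gamma> Cd (age N T))"
      using F_le_c[OF age_le_n] assms by simp
    then have "(\<Sum>t\<in>{1..<T}. \<gamma> ^ t * flush_cost P \<beta> Cd N t) \<le> \<gamma> * c"
      using flush_cost_potential[of T \<gamma> c N P \<beta> Cd] False no_slack by simp
    moreover have "flush_cost P \<beta> Cd N 0 = 0"
      using periodic by (simp add: periodic_publish_def flush_cost_def delay_sum_def)
    ultimately show ?thesis
      using False step_cost_flushing[OF periodic_flushing[OF periodic]]
      by (simp add: lessThan_atLeast0 sum.atLeast_Suc_lessThan)
  qed
qed

lemma total_cost_eq_SUP:
  assumes "0 \<le> \<gamma>" "0 \<le> P" "0 \<le> \<beta>" "\<And>i. 0 \<le> Cd i"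
  shows "total_cost \<gamma> P \<beta> Cd N = (SUP T. ennreal (\<Sum>t<T. \<gamma> ^ t * step_cost P \<beta> Cd N t))"
  unfolding total_cost_def suminf_eq_SUP
  using assms step_cost_nonneg[OF assms(2-4)] by simp

lemma total_cost_ge:
  fixes \<gamma> c :: real
  assumes "0 \<le> \<gamma>" "\<gamma> < 1" "0 \<le> P" "0 \<le> \<beta>" "\<And>i. 0 \<le> Cd i"
    and "\<And>n. 1 \<le> n \<Longrightarrow> c * (1 - \<gamma> ^ n) \<le> cycle_cost \<gamma> P \<beta> Cd n"
  shows "ennreal (\<gamma> * c) \<le> total_cost \<gamma> P \<beta> Cd N"
proof (rule LIMSEQ_le_const2)
  show "(\<lambda>T. ennreal (\<gamma> * c - \<gamma> ^ T * (\<beta> * P + \<gamma> * c))) \<longlonglongrightarrow> ennreal (\<gamma> * c)"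
  proof -
    have "(\<lambda>T. \<gamma> ^ T) \<longlonglongrightarrow> 0"
      using assms(1,2) by (rule LIMSEQ_realpow_zero)
    then have "(\<lambda>T. \<gamma> ^ T * (\<beta> * P + \<gamma> * c)) \<longlonglongrightarrow> 0 * (\<beta> * P + \<gamma> * c)"
      by (rule tendsto_mult_right)
    then have "(\<lambda>T. \<gamma> * c - \<gamma> ^ T * (\<beta> * P + \<gamma> * c)) \<longlonglongrightarrow> \<gamma> * c - 0 * (\<beta> * P + \<gamma> * c)"
      by (rule tendsto_diff[OF tendsto_const])
    then show ?thesis
      by (intro tendsto_ennrealI) simp
  qed
  have "ennreal (\<gamma> * c - \<gamma> ^ T * (\<beta> * P + \<gamma> * c)) \<le> total_cost \<gamma> P \<beta> Cd N" for T
    unfolding total_cost_eq_SUP[OF assms(1,3-5)]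
    by (rule SUP_upper2[of T]) (auto intro: ennreal_leI partial_cost_ge[OF assms(1,3-6)])
  then show "\<exists>M. \<forall>T\<ge>M. ennreal (\<gamma> * c - \<gamma> ^ T * (\<beta> * P + \<gamma> * c)) \<le> total_cost \<gamma> P \<beta> Cd N"
    by blast
qed

lemma periodic_total_cost_le:
  fixes \<gamma> c :: real
  assumes "periodic_publish n N" "0 < n"
    and "0 \<le> \<gamma>" "\<gamma> < 1" "0 \<le> P" "0 \<le> \<beta>" "\<And>i. 0 \<le> Cd i"
    and "c * (1 - \<gamma> ^ n) = cycle_cost \<gamma> P \<beta> Cd n"
  shows "total_cost \<gamma> P \<beta> Cd N \<le> ennreal (\<gamma> * c)"
  unfolding total_cost_eq_SUP[OF assms(3,5-7)]
  by (rule SUP_least) (rule ennreal_leI[OF periodic_partial_cost_le[OF assms]])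

theorem theorem1:
  fixes \<gamma> P \<beta> :: real and Cd :: "nat \<Rightarrow> real" and nstar :: nat
  assumes "0 < \<gamma>" and "\<gamma> < 1"
    and "0 \<le> P" and "0 \<le> \<beta>"
    and "\<And>i. 0 \<le> Cd i"
    and "1 \<le> nstar"
    and "\<And>n. 1 \<le> n \<Longrightarrow>
           (F_d \<gamma> Cd nstar + \<gamma> ^ (nstar - 1) * \<beta> * P) / (1 - \<gamma> ^ nstar)
             \<le> (F_d \<gamma> Cd n + \<gamma> ^ (n - 1) * \<beta> * P) / (1 - \<gamma> ^ n)"
  shows "\<exists>N. periodic_publish nstar N \<and> optimal \<gamma> P \<beta> Cd N"
proof -
  define c where "c = cycle_cost \<gamma> P \<beta> Cd nstar / (1 - \<gamma> ^ nstar)"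
  have discount_pos: "0 < 1 - \<gamma> ^ n" if "1 \<le> n" for n
    using assms(1,2) that by (simp add: power_less_one_iff)
  have c_min: "c * (1 - \<gamma> ^ n) \<le> cycle_cost \<gamma> P \<beta> Cd n" if "1 \<le> n" for n
    using assms(7)[OF that] discount_pos[OF that]
    by (simp add: c_def cycle_cost_def pos_le_divide_eq)
  have c_nstar: "c * (1 - \<gamma> ^ nstar) = cycle_cost \<gamma> P \<beta> Cd nstar"
    using discount_pos[OF assms(6)] by (simp add: c_def)
  obtain N where N: "periodic_publish nstar N"
    using periodic_publish_exists by blast
  have "total_cost \<gamma> P \<beta> Cd N \<le> ennreal (\<gamma> * c)"
    using periodic_total_cost_le[OF N _ _ assms(2-5) c_nstar] assms(1,6) by simp
  moreover have "ennreal (\<gamma> * c) \<le> total_cost \<gamma> P \<beta> Cd N'" for N'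
    using total_cost_ge[OF _ assms(2-5) c_min] assms(1) by simp
  ultimately have "total_cost \<gamma> P \<beta> Cd N \<le> total_cost \<gamma> P \<beta> Cd N'" for N'
    by (rule order_trans)
  with N periodic_feasible show ?thesis
    unfolding optimal_def by blast
qed

end
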